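(* Let $\Gamma$ be a group and let $\mathbb{K}$ be a field. Then the set of normal subgroups $N \subset \Gamma$ such that the group algebra $\mathbb{K}[\Gamma/N]$ is stably finite is closed (and hence compact) in $\mathcal{N}(\Gamma)$.
   Context: $\mathcal{N}(\Gamma)$ denotes the set of normal subgroups of $\Gamma$, viewed as a subset of $\mathcal{P}(\Gamma) = \{0,1\}^\Gamma$ with the prodiscrete (product of discrete) topology. A ring $R$ is stably finite if every square matrix over $R$ which is one-sided invertible is two-sided invertible. *)

theory Defs
  imports "HOL-Analysis.Analysis" "HOL-Algebra.Algebra"
begin

definition galg_carrier :: "('b, 'c) monoid_scheme \<Rightarrow> ('b \<Rightarrow> 'k::field) set" where
  "galg_carrier H = {f. {x. f x \<noteq> 0} \<subseteq> carrier H \<and> finite {x. f x \<noteq> 0}}"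

definition galg_mult ::
  "('b, 'c) monoid_scheme \<Rightarrow> ('b \<Rightarrow> 'k::field) \<Rightarrow> ('b \<Rightarrow> 'k) \<Rightarrow> ('b \<Rightarrow> 'k)" where
  "galg_mult H f g = (\<lambda>x. if x \<in> carrier H
      then (\<Sum>y\<in>{y \<in> carrier H. f y \<noteq> 0}. f y * g (inv\<^bsub>H\<^esub> y \<otimes>\<^bsub>H\<^esub> x))
      else 0)"

definition group_algebra :: "('b, 'c) monoid_scheme \<Rightarrow> ('b \<Rightarrow> 'k::field) ring" where
  "group_algebra H =
     \<lparr> carrier = galg_carrier H,
       monoid.mult = galg_mult H,
       monoid.one = (\<lambda>x. if x = \<one>\<^bsub>H\<^esub> then 1 else 0),
       ring.zero = (\<lambda>x. 0),
       ring.add = (\<lambda>f g x. f x + g x) \<rparr>"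

text \<open>n x n matrices over R are represented as functions nat => nat => elements,
  only the entries with indices < n being relevant.\<close>

definition mats :: "('r, 'm) ring_scheme \<Rightarrow> nat \<Rightarrow> (nat \<Rightarrow> nat \<Rightarrow> 'r) set" where
  "mats R n = {A. \<forall>i<n. \<forall>j<n. A i j \<in> carrier R}"

definition mat_mul :: "('r, 'm) ring_scheme \<Rightarrow> nat \<Rightarrow> (nat \<Rightarrow> nat \<Rightarrow> 'r) \<Rightarrow> (nat \<Rightarrow> nat \<Rightarrow> 'r) \<Rightarrow> (nat \<Rightarrow> nat \<Rightarrow> 'r)" where
  "mat_mul R n A B = (\<lambda>i j. if i < n \<and> j < n
      then (\<Oplus>\<^bsub>R\<^esub> k\<in>{..<n}. A i k \<otimes>\<^bsub>R\<^esub> B k j) else \<zero>\<^bsub>R\<^esub>)"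

definition mat_id :: "('r, 'm) ring_scheme \<Rightarrow> nat \<Rightarrow> (nat \<Rightarrow> nat \<Rightarrow> 'r)" where
  "mat_id R n = (\<lambda>i j. if i < n \<and> j < n \<and> i = j then \<one>\<^bsub>R\<^esub> else \<zero>\<^bsub>R\<^esub>)"

definition stably_finite :: "('r, 'm) ring_scheme \<Rightarrow> bool" where
  "stably_finite R \<longleftrightarrow>
     (\<forall>n A B. A \<in> mats R n \<and> B \<in> mats R n \<and> mat_mul R n A B = mat_id R n
        \<longrightarrow> mat_mul R n B A = mat_id R n)"

definition powerset_topology :: "('a, 'c) monoid_scheme \<Rightarrow> ('a \<Rightarrow> bool) topology" where
  "powerset_topology G = product_topology (\<lambda>_. discrete_topology (UNIV :: bool set)) (carrier G)"

text \<open>A subset N of the carrier is identified with its indicator function on the carrier.\<close>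
definition set_to_point :: "('a, 'c) monoid_scheme \<Rightarrow> 'a set \<Rightarrow> ('a \<Rightarrow> bool)" where
  "set_to_point G N = restrict (\<lambda>x. x \<in> N) (carrier G)"

definition normal_subgroup_space :: "('a, 'c) monoid_scheme \<Rightarrow> ('a \<Rightarrow> bool) set" where
  "normal_subgroup_space G = set_to_point G ` {N. N \<lhd> G}"

end

theory Submission
  imports Defs
begin

text \<open>If \<open>K[\<Gamma>/N]\<close> is not stably finite, pick \<open>A\<close>, \<open>B\<close> with \<open>AB = 1 \<noteq> BA\<close> and lift them to
  \<open>K[\<Gamma>]\<close>. Both identities modulo \<open>N\<close> only involve finitely many group elements, and whether they
  hold is decided by which of their quotients lie in \<open>N\<close>. Hence they persist for every normal
  subgroup agreeing with \<open>N\<close> on a finite set, i.e. on a basic open neighbourhood of \<open>N\<close> in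
  \<open>{0,1}\<^sup>\<Gamma>\<close>. Together with the closedness of \<open>\<N>(\<Gamma>)\<close>, which is cut out by finitely checkable
  conditions, this makes the set closed in the compact space \<open>{0,1}\<^sup>\<Gamma>\<close>.\<close>

definition supp :: "('b \<Rightarrow> 'k::zero) \<Rightarrow> 'b set" where
  "supp f = {x. f x \<noteq> 0}"

lemma galg_carrier_iff: "f \<in> galg_carrier H \<longleftrightarrow> supp f \<subseteq> carrier H \<and> finite (supp f)"
  unfolding galg_carrier_def supp_def by simp

lemma group_algebra_simps [simp]:
  "carrier (group_algebra H) = galg_carrier H"
  "monoid.mult (group_algebra H) = galg_mult H"
  "monoid.one (group_algebra H) = (\<lambda>x. if x = \<one>\<^bsub>H\<^esub> then 1 else 0)"
  "ring.zero (group_algebra H) = (\<lambda>x. 0)"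
  "ring.add (group_algebra H) = (\<lambda>f g x. f x + g x)"
  unfolding group_algebra_def by simp_all

lemma zero_in_galg_carrier: "(\<lambda>x. 0) \<in> galg_carrier H"
  by (simp add: galg_carrier_iff supp_def)

lemma supp_sum_subset: "supp (\<lambda>x. \<Sum>k\<in>A. \<phi> k x) \<subseteq> (\<Union>k\<in>A. supp (\<phi> k))"
  unfolding supp_def by (auto intro: sum.neutral)

lemma sum_in_galg_carrier:
  assumes "finite A" "\<And>k. k \<in> A \<Longrightarrow> \<phi> k \<in> galg_carrier H"
  shows "(\<lambda>x. \<Sum>k\<in>A. \<phi> k x) \<in> galg_carrier H"
proof -
  have "finite (\<Union>k\<in>A. supp (\<phi> k))" "(\<Union>k\<in>A. supp (\<phi> k)) \<subseteq> carrier H"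
    using assms unfolding galg_carrier_iff by auto
  then show ?thesis
    unfolding galg_carrier_iff using supp_sum_subset[of \<phi> A] by (meson finite_subset order_trans)
qed

lemma abelian_monoid_group_algebra: "abelian_monoid (group_algebra H :: ('b \<Rightarrow> 'k::field) ring)"
proof (rule abelian_monoidI)
  fix x y :: "'b \<Rightarrow> 'k"
  assume "x \<in> carrier (group_algebra H)" "y \<in> carrier (group_algebra H)"
  then show "x \<oplus>\<^bsub>group_algebra H\<^esub> y \<in> carrier (group_algebra H)"
    using sum_in_galg_carrier[of "{True, False}" "\<lambda>b. if b then x else y" H] by simp
qed (simp_all add: add_ac zero_in_galg_carrier)

lemma finsum_group_algebra:
  assumes "finite A" "\<And>k. k \<in> A \<Longrightarrow> f k \<in> galg_carrier H"
  shows "finsum (group_algebra H :: ('b \<Rightarrow> 'k::field) ring) f A = (\<lambda>x. \<Sum>k\<in>A. f k x)"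
  using assms
proof (induction A rule: finite_induct)
  case empty
  then show ?case using abelian_monoid.finsum_empty[OF abelian_monoid_group_algebra] by simp
next
  case (insert a A)
  then have "finsum (group_algebra H :: ('b \<Rightarrow> 'k) ring) f (insert a A)
     = f a \<oplus>\<^bsub>group_algebra H\<^esub> finsum (group_algebra H :: ('b \<Rightarrow> 'k) ring) f A"
    by (intro abelian_monoid.finsum_insert[OF abelian_monoid_group_algebra]) auto
  then show ?case using insert by simp
qed

context group
begin

lemma supp_restrict_carrier: "\<phi> \<in> galg_carrier G \<Longrightarrow> {y \<in> carrier G. \<phi> y \<noteq> 0} = supp \<phi>"
  unfolding galg_carrier_iff supp_def by auto

lemma galg_mult_supp_eq:
  assumes "\<phi> \<in> galg_carrier G" "x \<in> carrier G"
  shows "galg_mult G \<phi> \<psi> x = (\<Sum>y\<in>supp \<phi>. \<phi> y * \<psi> (inv y \<otimes> x))"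
  using assms by (simp add: galg_mult_def supp_restrict_carrier)

lemma supp_galg_mult:
  assumes "\<phi> \<in> galg_carrier G"
  shows "supp (galg_mult G \<phi> \<psi>) \<subseteq> (\<lambda>(y, w). y \<otimes> w) ` (supp \<phi> \<times> supp \<psi>)"
proof
  fix z assume "z \<in> supp (galg_mult G \<phi> \<psi>)"
  then have z: "z \<in> carrier G" "(\<Sum>y\<in>supp \<phi>. \<phi> y * \<psi> (inv y \<otimes> z)) \<noteq> 0"
    unfolding supp_def galg_mult_def supp_restrict_carrier[OF assms] by (auto split: if_splits)
  then obtain y where y: "y \<in> supp \<phi>" "\<phi> y * \<psi> (inv y \<otimes> z) \<noteq> 0"
    by (meson sum.neutral)
  have "y \<in> carrier G" using y(1) assms unfolding galg_carrier_iff by auto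
  then have "z = y \<otimes> (inv y \<otimes> z)" using z(1) by (simp flip: m_assoc)
  moreover have "inv y \<otimes> z \<in> supp \<psi>" using y(2) unfolding supp_def by auto
  ultimately show "z \<in> (\<lambda>(y, w). y \<otimes> w) ` (supp \<phi> \<times> supp \<psi>)" using y(1) by force
qed

lemma galg_mult_in_galg_carrier:
  assumes "\<phi> \<in> galg_carrier G" "\<psi> \<in> galg_carrier G"
  shows "galg_mult G \<phi> \<psi> \<in> galg_carrier G"
proof -
  have "supp (galg_mult G \<phi> \<psi>) \<subseteq> carrier G" unfolding supp_def galg_mult_def by auto
  moreover have "finite ((\<lambda>(y, w). y \<otimes> w) ` (supp \<phi> \<times> supp \<psi>))"
    using assms unfolding galg_carrier_iff by auto
  ultimately show ?thesis
    unfolding galg_carrier_iff using supp_galg_mult[OF assms(1)] finite_subset by blast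
qed

lemma mat_mul_group_algebra:
  assumes "\<And>i k. a i k \<in> galg_carrier G" "\<And>i k. b i k \<in> galg_carrier G" "i < n" "j < n"
  shows "mat_mul (group_algebra G :: ('a \<Rightarrow> 'k::field) ring) n a b i j
    = (\<lambda>x. \<Sum>k<n. galg_mult G (a i k) (b k j) x)"
  using assms by (simp add: mat_mul_def finsum_group_algebra galg_mult_in_galg_carrier)

lemma mat_mul_in_galg_carrier:
  assumes "\<And>i k. a i k \<in> galg_carrier G" "\<And>i k. b i k \<in> galg_carrier G"
  shows "mat_mul (group_algebra G :: ('a \<Rightarrow> 'k::field) ring) n a b i j \<in> galg_carrier G"
proof (cases "i < n \<and> j < n")
  case True
  then show ?thesis using assms
    by (simp add: mat_mul_group_algebra galg_mult_in_galg_carrier sum_in_galg_carrier)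
qed (auto simp: mat_mul_def zero_in_galg_carrier)

end

section \<open>The quotient map \<open>K[G] \<rightarrow> K[G/N]\<close>\<close>

definition galg_push :: "('a, 'c) monoid_scheme \<Rightarrow> 'a set \<Rightarrow> ('a \<Rightarrow> 'k::field) \<Rightarrow> 'a set \<Rightarrow> 'k" where
  "galg_push G N \<phi> C = (if C \<in> rcosets\<^bsub>G\<^esub> N then \<Sum>y\<in>{y\<in>supp \<phi>. y \<in> C}. \<phi> y else 0)"

context normal
begin

lemma rcos_eq_iff_mem:
  assumes "C \<in> rcosets H" "y \<in> carrier G"
  shows "H #> y = C \<longleftrightarrow> y \<in> C"
proof -
  obtain c where c: "c \<in> carrier G" "C = H #> c" using assms(1) unfolding RCOSETS_def by auto
  show ?thesis
    using repr_independence[OF _ c(1) subgroup_axioms] repr_independenceD[OF subgroup_axioms assms(2)] c(2)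
    by auto
qed

lemma conj_mem_iff:
  assumes "a \<in> carrier G" "g \<in> carrier G"
  shows "g \<otimes> a \<otimes> inv g \<in> H \<longleftrightarrow> a \<in> H"
proof
  assume "g \<otimes> a \<otimes> inv g \<in> H"
  then have "inv g \<otimes> (g \<otimes> a \<otimes> inv g) \<otimes> inv (inv g) \<in> H"
    using assms normal_inv_iff normal_axioms by blast
  then show "a \<in> H" using assms by (simp add: m_assoc flip: m_assoc[of "inv g" g a])
qed (use assms normal_inv_iff normal_axioms in blast)

lemma mult_mem_rcos_mult_iff:
  assumes "g \<in> carrier G" "x \<in> carrier G" "z \<in> carrier G"
  shows "g \<otimes> z \<in> H #> (g \<otimes> x) \<longleftrightarrow> z \<in> H #> x"
proof -
  have "(g \<otimes> z) \<otimes> inv (g \<otimes> x) = g \<otimes> (z \<otimes> inv x) \<otimes> inv g"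
    using assms by (simp add: m_assoc inv_mult_group)
  then show ?thesis
    using assms conj_mem_iff[of "z \<otimes> inv x" g] by (simp add: rcos_module[OF is_group])
qed

lemma FactGroup_inv_mult_rcos:
  assumes "y \<in> carrier G" "x \<in> carrier G"
  shows "inv\<^bsub>G Mod H\<^esub> (H #> y) <#> (H #> x) = H #> (inv y \<otimes> x)"
proof -
  have "H #> y \<in> carrier (G Mod H)" using assms(1) by (simp add: carrier_FactGroup)
  then show ?thesis using assms by (simp add: inv_FactGroup rcos_inv rcos_sum)
qed

lemma galg_push_eq_sum_over:
  assumes "finite T" "supp \<phi> \<subseteq> T"
  shows "galg_push G H \<phi> C = (if C \<in> rcosets H then \<Sum>y\<in>{y\<in>T. y \<in> C}. \<phi> y else 0)"
proof -
  have "(\<Sum>y\<in>{y\<in>supp \<phi>. y \<in> C}. \<phi> y) = (\<Sum>y\<in>{y\<in>T. y \<in> C}. \<phi> y)"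
    by (rule sum.mono_neutral_left) (use assms in \<open>auto simp: supp_def\<close>)
  then show ?thesis unfolding galg_push_def by simp
qed

lemma supp_galg_push: "supp (galg_push G H \<phi>) \<subseteq> (\<lambda>y. H #> y) ` supp \<phi>"
proof
  fix C assume "C \<in> supp (galg_push G H \<phi>)"
  then have C: "C \<in> rcosets H" "(\<Sum>y\<in>{y\<in>supp \<phi>. y \<in> C}. \<phi> y) \<noteq> 0"
    unfolding supp_def galg_push_def by (auto split: if_splits)
  then obtain y where y: "y \<in> supp \<phi>" "y \<in> C" by (metis (no_types, lifting) empty_Collect_eq sum.empty)
  then have "H #> y = C"
    using rcos_eq_iff_mem[OF C(1)] rcosets_carrier[OF is_group C(1)] by blast
  then show "C \<in> (\<lambda>y. H #> y) ` supp \<phi>" using y by blast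
qed

lemma galg_push_in_galg_carrier:
  assumes "\<phi> \<in> galg_carrier G"
  shows "galg_push G H \<phi> \<in> galg_carrier (G Mod H)"
proof -
  have "(\<lambda>y. H #> y) ` supp \<phi> \<subseteq> carrier (G Mod H)"
    using assms unfolding galg_carrier_iff carrier_FactGroup by auto
  then show ?thesis using supp_galg_push assms unfolding galg_carrier_iff
    by (meson finite_imageI finite_subset order_trans)
qed

lemma galg_push_galg_mult_rcos:
  assumes "\<phi> \<in> galg_carrier G" "\<psi> \<in> galg_carrier G" "x \<in> carrier G"
  shows "galg_push G H (galg_mult G \<phi> \<psi>) (H #> x)
    = (\<Sum>y\<in>supp \<phi>. \<phi> y * galg_push G H \<psi> (H #> (inv y \<otimes> x)))"
proof -
  define Z where "Z = (\<lambda>(y, w). y \<otimes> w) ` (supp \<phi> \<times> supp \<psi>)"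
  have Z: "finite Z" "Z \<subseteq> carrier G"
    using assms(1,2) unfolding Z_def galg_carrier_iff by auto
  have Hx: "H #> x \<in> rcosets H" using assms(3) by (simp add: rcosetsI subset)
  have inner: "galg_push G H \<psi> (H #> (inv y \<otimes> x)) = (\<Sum>z\<in>{z\<in>Z. z \<in> H #> x}. \<psi> (inv y \<otimes> z))"
    if y: "y \<in> supp \<phi>" for y
  proof -
    have yc: "y \<in> carrier G" using y assms(1) unfolding galg_carrier_iff by auto
    have inj: "inj_on (\<lambda>z. inv y \<otimes> z) Z" using yc Z(2) by (intro inj_onI) (auto simp: subset_iff)
    have "supp \<psi> \<subseteq> (\<lambda>z. inv y \<otimes> z) ` Z"
    proof
      fix w assume "w \<in> supp \<psi>"
      moreover have "w = inv y \<otimes> (y \<otimes> w)"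
        using \<open>w \<in> supp \<psi>\<close> assms(2) yc unfolding galg_carrier_iff by (auto simp flip: m_assoc)
      ultimately show "w \<in> (\<lambda>z. inv y \<otimes> z) ` Z" using y unfolding Z_def by blast
    qed
    then have "galg_push G H \<psi> (H #> (inv y \<otimes> x))
        = (\<Sum>w\<in>{w\<in>(\<lambda>z. inv y \<otimes> z) ` Z. w \<in> H #> (inv y \<otimes> x)}. \<psi> w)"
      using galg_push_eq_sum_over[OF finite_imageI[OF Z(1)], of \<psi>] yc assms(3) by (simp add: rcosetsI subset)
    also have "{w\<in>(\<lambda>z. inv y \<otimes> z) ` Z. w \<in> H #> (inv y \<otimes> x)} = (\<lambda>z. inv y \<otimes> z) ` {z\<in>Z. z \<in> H #> x}"
      using mult_mem_rcos_mult_iff[of "inv y" x] yc assms(3) Z(2) by auto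
    also have "(\<Sum>w\<in>\<dots>. \<psi> w) = (\<Sum>z\<in>{z\<in>Z. z \<in> H #> x}. \<psi> (inv y \<otimes> z))"
      by (rule sum.reindex[unfolded comp_def]) (rule inj_on_subset[OF inj], blast)
    finally show ?thesis .
  qed
  have "galg_push G H (galg_mult G \<phi> \<psi>) (H #> x) = (\<Sum>z\<in>{z\<in>Z. z \<in> H #> x}. galg_mult G \<phi> \<psi> z)"
    using galg_push_eq_sum_over[OF Z(1) supp_galg_mult[OF assms(1), of \<psi>, folded Z_def]] Hx by simp
  also have "\<dots> = (\<Sum>z\<in>{z\<in>Z. z \<in> H #> x}. \<Sum>y\<in>supp \<phi>. \<phi> y * \<psi> (inv y \<otimes> z))"
    using Z(2) assms(1) by (intro sum.cong) (auto simp: galg_mult_supp_eq)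
  also have "\<dots> = (\<Sum>y\<in>supp \<phi>. \<Sum>z\<in>{z\<in>Z. z \<in> H #> x}. \<phi> y * \<psi> (inv y \<otimes> z))"
    by (rule sum.swap)
  also have "\<dots> = (\<Sum>y\<in>supp \<phi>. \<phi> y * galg_push G H \<psi> (H #> (inv y \<otimes> x)))"
    by (intro sum.cong refl) (simp add: inner sum_distrib_left)
  finally show ?thesis .
qed

lemma galg_mult_galg_push_rcos:
  assumes "\<phi> \<in> galg_carrier G" "x \<in> carrier G"
  shows "galg_mult (G Mod H) (galg_push G H \<phi>) f (H #> x) = (\<Sum>y\<in>supp \<phi>. \<phi> y * f (H #> (inv y \<otimes> x)))"
proof -
  let ?cos = "\<lambda>y. H #> y"
  let ?R = "\<lambda>D. f (inv\<^bsub>G Mod H\<^esub> D \<otimes>\<^bsub>G Mod H\<^esub> (H #> x))"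
  have S: "finite (supp \<phi>)" "supp \<phi> \<subseteq> carrier G" using assms(1) unfolding galg_carrier_iff by auto
  have "galg_mult (G Mod H) (galg_push G H \<phi>) f (H #> x) = (\<Sum>D\<in>supp (galg_push G H \<phi>). galg_push G H \<phi> D * ?R D)"
    using assms by (intro group.galg_mult_supp_eq factorgroup_is_group galg_push_in_galg_carrier)
      (auto simp: carrier_FactGroup)
  also have "\<dots> = (\<Sum>D\<in>?cos ` supp \<phi>. galg_push G H \<phi> D * ?R D)"
    by (rule sum.mono_neutral_left) (use supp_galg_push S in \<open>auto simp: supp_def\<close>)
  also have "\<dots> = (\<Sum>D\<in>?cos ` supp \<phi>. \<Sum>y\<in>{y\<in>supp \<phi>. ?cos y = D}. \<phi> y * ?R (?cos y))"
  proof (rule sum.cong[OF refl])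
    fix D assume "D \<in> ?cos ` supp \<phi>"
    then have D: "D \<in> rcosets H" using S by (auto simp: rcosetsI subset)
    then have "{y\<in>supp \<phi>. y \<in> D} = {y\<in>supp \<phi>. ?cos y = D}" using rcos_eq_iff_mem S by blast
    then show "galg_push G H \<phi> D * ?R D = (\<Sum>y\<in>{y\<in>supp \<phi>. ?cos y = D}. \<phi> y * ?R (?cos y))"
      unfolding galg_push_def using D by (simp add: sum_distrib_right)
  qed
  also have "\<dots> = (\<Sum>y\<in>supp \<phi>. \<phi> y * ?R (?cos y))"
    by (rule sum.image_gen[OF S(1), of "\<lambda>y. \<phi> y * ?R (?cos y)" ?cos, symmetric])
  also have "\<dots> = (\<Sum>y\<in>supp \<phi>. \<phi> y * f (H #> (inv y \<otimes> x)))"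
    using S assms(2) by (intro sum.cong refl) (auto simp: FactGroup_inv_mult_rcos)
  finally show ?thesis .
qed

lemma galg_push_mult:
  assumes "\<phi> \<in> galg_carrier G" "\<psi> \<in> galg_carrier G"
  shows "galg_push G H (galg_mult G \<phi> \<psi>) = galg_mult (G Mod H) (galg_push G H \<phi>) (galg_push G H \<psi>)"
proof
  fix C
  show "galg_push G H (galg_mult G \<phi> \<psi>) C = galg_mult (G Mod H) (galg_push G H \<phi>) (galg_push G H \<psi>) C"
  proof (cases "C \<in> rcosets H")
    case True
    then obtain x where "x \<in> carrier G" "C = H #> x" unfolding RCOSETS_def by auto
    then show ?thesis using assms by (simp add: galg_push_galg_mult_rcos galg_mult_galg_push_rcos)
  qed (simp add: galg_push_def galg_mult_def FactGroup_def)
qed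

lemma galg_push_sum:
  assumes "finite A" "\<And>k. k \<in> A \<Longrightarrow> \<phi> k \<in> galg_carrier G"
  shows "galg_push G H (\<lambda>x. \<Sum>k\<in>A. \<phi> k x) C = (\<Sum>k\<in>A. galg_push G H (\<phi> k) C)"
proof -
  define T where "T = (\<Union>k\<in>A. supp (\<phi> k))"
  have T: "finite T" unfolding T_def using assms unfolding galg_carrier_iff by auto
  have "galg_push G H (\<lambda>x. \<Sum>k\<in>A. \<phi> k x) C
      = (if C \<in> rcosets H then \<Sum>y\<in>{y\<in>T. y \<in> C}. \<Sum>k\<in>A. \<phi> k y else 0)"
    using galg_push_eq_sum_over[OF T supp_sum_subset[of \<phi> A, folded T_def]] by simp
  also have "\<dots> = (\<Sum>k\<in>A. (if C \<in> rcosets H then \<Sum>y\<in>{y\<in>T. y \<in> C}. \<phi> k y else 0))"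
    by (simp add: sum.swap[of _ _ A])
  also have "\<dots> = (\<Sum>k\<in>A. galg_push G H (\<phi> k) C)"
    by (intro sum.cong refl, subst galg_push_eq_sum_over[OF T]) (auto simp: T_def)
  finally show ?thesis .
qed

lemma galg_push_zero: "galg_push G H \<zero>\<^bsub>group_algebra G\<^esub> = \<zero>\<^bsub>group_algebra (G Mod H)\<^esub>"
  unfolding galg_push_def supp_def by auto

lemma galg_push_one: "galg_push G H (\<one>\<^bsub>group_algebra G\<^esub> :: 'a \<Rightarrow> 'k::field) = \<one>\<^bsub>group_algebra (G Mod H)\<^esub>"
proof
  fix C
  have supp_one: "\<And>C. {y\<in>supp (\<lambda>x. if x = \<one> then (1::'k) else 0). y \<in> C} = (if \<one> \<in> C then {\<one>} else {})"
    by (auto simp: supp_def)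
  have "C \<in> rcosets H \<Longrightarrow> \<one> \<in> C \<longleftrightarrow> C = H"
    using rcos_eq_iff_mem[of C \<one>] coset_mult_one[OF subset] by auto
  moreover have "H \<in> rcosets H" by (rule subgroup_in_rcosets[OF is_group])
  ultimately show "galg_push G H \<one>\<^bsub>group_algebra G\<^esub> C = (\<one>\<^bsub>group_algebra (G Mod H)\<^esub> :: 'a set \<Rightarrow> 'k) C"
    by (simp add: galg_push_def supp_one one_closed)
qed

lemma galg_push_surj:
  assumes "f \<in> galg_carrier (G Mod H)"
  shows "\<exists>\<phi>\<in>galg_carrier G. galg_push G H \<phi> = f"
proof -
  define rep where "rep = (\<lambda>C::'a set. SOME y. y \<in> C)"
  define \<phi> where "\<phi> = (\<lambda>x. if x \<in> carrier G \<and> rep (H #> x) = x then f (H #> x) else 0)"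
  have f: "finite (supp f)" "supp f \<subseteq> rcosets H"
    using assms unfolding galg_carrier_iff FactGroup_def by auto
  have "supp \<phi> \<subseteq> rep ` supp f"
  proof
    fix x assume "x \<in> supp \<phi>"
    then have "H #> x \<in> supp f" "x = rep (H #> x)" unfolding supp_def \<phi>_def by (auto split: if_splits)
    then show "x \<in> rep ` supp f" by (rule rev_image_eqI)
  qed
  moreover have "supp \<phi> \<subseteq> carrier G" unfolding supp_def \<phi>_def by auto
  ultimately have "\<phi> \<in> galg_carrier G"
    unfolding galg_carrier_iff using f(1) by (meson finite_imageI finite_subset)
  moreover have "galg_push G H \<phi> C = f C" for C
  proof (cases "C \<in> rcosets H")
    case False
    then show ?thesis using f(2) unfolding galg_push_def supp_def by auto
  next
    case True
    have C: "C \<subseteq> carrier G" using rcosets_carrier[OF is_group True] .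
    have "rep C \<in> C" unfolding rep_def
      using rcosets_non_empty[OF True] by (auto intro: someI)
    then have rC: "rep C \<in> carrier G" "H #> rep C = C" using C rcos_eq_iff_mem[OF True] by auto
    have "{y\<in>supp \<phi>. y \<in> C} \<subseteq> {rep C}"
    proof
      fix y assume "y \<in> {y\<in>supp \<phi>. y \<in> C}"
      then have "y \<in> carrier G" "rep (H #> y) = y" "y \<in> C"
        unfolding supp_def \<phi>_def by (auto split: if_splits)
      moreover from this have "H #> y = C" using rcos_eq_iff_mem[OF True] by blast
      ultimately show "y \<in> {rep C}" by auto
    qed
    then have "(\<Sum>y\<in>{y\<in>supp \<phi>. y \<in> C}. \<phi> y) = (\<Sum>y\<in>{rep C}. \<phi> y)"
      by (intro sum.mono_neutral_left) (use \<open>rep C \<in> C\<close> in \<open>auto simp: supp_def\<close>)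
    also have "\<dots> = f C" unfolding \<phi>_def using rC by simp
    finally show ?thesis unfolding galg_push_def using True by simp
  qed
  ultimately show ?thesis by blast
qed

lemma galg_push_rcos:
  assumes "finite T" "T \<subseteq> carrier G" "supp \<phi> \<subseteq> T" "x \<in> carrier G"
  shows "galg_push G H \<phi> (H #> x) = (\<Sum>y\<in>{y\<in>T. y \<otimes> inv x \<in> H}. \<phi> y)"
proof -
  have "{y\<in>T. y \<in> H #> x} = {y\<in>T. y \<otimes> inv x \<in> H}"
    using rcos_module[OF is_group assms(4)] assms(2) by blast
  then show ?thesis using galg_push_eq_sum_over[OF assms(1,3)] assms(4) by (simp add: rcosetsI subset)
qed

lemma galg_push_eq_iff:
  assumes "finite T" "T \<subseteq> carrier G" "supp \<phi> \<subseteq> T" "supp \<psi> \<subseteq> T"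
  shows "galg_push G H \<phi> = galg_push G H \<psi> \<longleftrightarrow>
    (\<forall>x\<in>T. (\<Sum>y\<in>{y\<in>T. y \<otimes> inv x \<in> H}. \<phi> y) = (\<Sum>y\<in>{y\<in>T. y \<otimes> inv x \<in> H}. \<psi> y))"
    (is "_ \<longleftrightarrow> (\<forall>x\<in>T. ?\<Phi> x = ?\<Psi> x)")
proof
  assume eq: "galg_push G H \<phi> = galg_push G H \<psi>"
  show "\<forall>x\<in>T. ?\<Phi> x = ?\<Psi> x"
  proof
    fix x assume "x \<in> T"
    then have x: "x \<in> carrier G" using assms(2) by blast
    from eq have "galg_push G H \<phi> (H #> x) = galg_push G H \<psi> (H #> x)" by simp
    then show "?\<Phi> x = ?\<Psi> x" by (simp add: galg_push_rcos[OF assms(1,2,3) x] galg_push_rcos[OF assms(1,2,4) x])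
  qed
next
  assume eq: "\<forall>x\<in>T. ?\<Phi> x = ?\<Psi> x"
  have "galg_push G H \<phi> C = galg_push G H \<psi> C" for C
  proof (cases "\<exists>x\<in>T. C = H #> x")
    case True
    then obtain x where "x \<in> T" "C = H #> x" by blast
    moreover have "x \<in> carrier G" using \<open>x \<in> T\<close> assms(2) by blast
    ultimately show ?thesis
      using galg_push_rcos[OF assms(1,2,3)] galg_push_rcos[OF assms(1,2,4)] eq by simp
  next
    case False
    show ?thesis
    proof (cases "C \<in> rcosets H")
      case True
      then have "{y\<in>T. y \<in> C} = {}" using False rcos_eq_iff_mem assms(2) by blast
      then show ?thesis
        unfolding galg_push_eq_sum_over[OF assms(1,3)] galg_push_eq_sum_over[OF assms(1,4)]
        by (simp only: sum.empty if_cancel)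
    qed (simp add: galg_push_def)
  qed
  then show "galg_push G H \<phi> = galg_push G H \<psi>" ..
qed

end

section \<open>Matrices over \<open>K[G/H]\<close>\<close>

definition mat_lift ::
  "('a, 'c) monoid_scheme \<Rightarrow> 'a set \<Rightarrow> nat \<Rightarrow> (nat \<Rightarrow> nat \<Rightarrow> 'a \<Rightarrow> 'k::field) \<Rightarrow> (nat \<Rightarrow> nat \<Rightarrow> 'a set \<Rightarrow> 'k) \<Rightarrow> bool"
  where "mat_lift G N n a A \<longleftrightarrow>
    (\<forall>i k. a i k \<in> galg_carrier G) \<and> (\<forall>i<n. \<forall>k<n. A i k = galg_push G N (a i k))"

lemma mat_lift_galg_push: "(\<And>i k. a i k \<in> galg_carrier G) \<Longrightarrow> mat_lift G N n a (\<lambda>i k. galg_push G N (a i k))"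
  by (simp add: mat_lift_def)

lemma mat_mul_eq_mat_id_iff:
  "mat_mul R n A B = mat_id R n \<longleftrightarrow> (\<forall>i<n. \<forall>j<n. mat_mul R n A B i j = mat_id R n i j)"
  by (auto simp: fun_eq_iff mat_mul_def mat_id_def)

context normal
begin

lemma mat_lift_exists:
  assumes "A \<in> mats (group_algebra (G Mod H) :: ('a set \<Rightarrow> 'k::field) ring) n"
  obtains a where "mat_lift G H n a A"
proof -
  have "\<exists>\<phi>\<in>galg_carrier G. i < n \<longrightarrow> k < n \<longrightarrow> A i k = galg_push G H \<phi>" for i k
  proof (cases "i < n \<and> k < n")
    case True
    then have "A i k \<in> galg_carrier (G Mod H)" using assms unfolding mats_def by simp
    then show ?thesis using galg_push_surj by metis
  qed (use zero_in_galg_carrier in blast)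
  then obtain a where "\<forall>i k. a i k \<in> galg_carrier G \<and> (i < n \<longrightarrow> k < n \<longrightarrow> A i k = galg_push G H (a i k))"
    by metis
  then show ?thesis using that unfolding mat_lift_def by blast
qed

lemma mat_mul_galg_push:
  assumes "mat_lift G H n a A" "mat_lift G H n b B" "i < n" "j < n"
  shows "mat_mul (group_algebra (G Mod H)) n A B i j = galg_push G H (mat_mul (group_algebra G) n a b i j)"
proof -
  have a: "\<And>i k. a i k \<in> galg_carrier G" and b: "\<And>i k. b i k \<in> galg_carrier G"
    using assms(1,2) unfolding mat_lift_def by auto
  have AB: "A i k \<otimes>\<^bsub>group_algebra (G Mod H)\<^esub> B k j = galg_push G H (galg_mult G (a i k) (b k j))"
    if "k < n" for k
    using that assms unfolding mat_lift_def by (simp add: galg_push_mult)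
  have AB_carrier: "A i k \<otimes>\<^bsub>group_algebra (G Mod H)\<^esub> B k j \<in> galg_carrier (G Mod H)"
    if "k \<in> {..<n}" for k
    using that AB a b by (simp add: galg_push_in_galg_carrier galg_mult_in_galg_carrier)
  have "mat_mul (group_algebra (G Mod H)) n A B i j
      = (\<lambda>C. \<Sum>k<n. (A i k \<otimes>\<^bsub>group_algebra (G Mod H)\<^esub> B k j) C)"
    unfolding mat_mul_def using assms(3,4) finsum_group_algebra[OF finite_lessThan AB_carrier] by simp
  also have "\<dots> = (\<lambda>C. \<Sum>k<n. galg_push G H (galg_mult G (a i k) (b k j)) C)"
    using AB by simp
  also have "\<dots> = galg_push G H (\<lambda>x. \<Sum>k<n. galg_mult G (a i k) (b k j) x)"
    by (rule ext, rule galg_push_sum[symmetric]) (simp_all add: galg_mult_in_galg_carrier a b)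
  also have "\<dots> = galg_push G H (mat_mul (group_algebra G) n a b i j)"
    using assms(3,4) a b by (simp add: mat_mul_group_algebra)
  finally show ?thesis .
qed

lemma mat_id_galg_push:
  assumes "i < n" "j < n"
  shows "mat_id (group_algebra (G Mod H)) n i j
    = galg_push G H (mat_id (group_algebra G :: ('a \<Rightarrow> 'k::field) ring) n i j)"
  using assms unfolding mat_id_def
  by (cases "i = j") (simp_all del: group_algebra_simps add: galg_push_one galg_push_zero)

lemma mat_mul_eq_mat_id_iff_galg_push:
  assumes "mat_lift G H n a A" "mat_lift G H n b B"
  shows "mat_mul (group_algebra (G Mod H)) n A B = mat_id (group_algebra (G Mod H)) n \<longleftrightarrow>
    (\<forall>i<n. \<forall>j<n. galg_push G H (mat_mul (group_algebra G) n a b i j)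
      = galg_push G H (mat_id (group_algebra G) n i j))"
  unfolding mat_mul_eq_mat_id_iff by (simp add: mat_mul_galg_push[OF assms] mat_id_galg_push)

end

lemma galg_push_eq_transfer:
  fixes G (structure)
  assumes "M \<lhd> G" "M' \<lhd> G" "finite T" "T \<subseteq> carrier G" "supp \<phi> \<subseteq> T" "supp \<psi> \<subseteq> T"
    and "\<forall>x\<in>T. \<forall>y\<in>T. y \<otimes> inv x \<in> M \<longleftrightarrow> y \<otimes> inv x \<in> M'"
  shows "galg_push G M \<phi> = galg_push G M \<psi> \<longleftrightarrow> galg_push G M' \<phi> = galg_push G M' \<psi>"
proof -
  have "{y\<in>T. y \<otimes> inv x \<in> M} = {y\<in>T. y \<otimes> inv x \<in> M'}" if "x \<in> T" for x
    using assms(7) that by blast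
  then show ?thesis
    unfolding normal.galg_push_eq_iff[OF assms(1,3-6)] normal.galg_push_eq_iff[OF assms(2,3-6)] by simp
qed

lemma mat_mul_eq_mat_id_transfer:
  fixes G :: "('a, 'c) monoid_scheme" (structure)
    and a b :: "nat \<Rightarrow> nat \<Rightarrow> 'a \<Rightarrow> 'k::field"
  assumes "M \<lhd> G" "M' \<lhd> G"
    and "mat_lift G M n a A" "mat_lift G M n b B" "mat_lift G M' n a A'" "mat_lift G M' n b B'"
    and "finite T" "T \<subseteq> carrier G" "\<one> \<in> T" "\<And>i j. supp (mat_mul (group_algebra G) n a b i j) \<subseteq> T"
    and "\<forall>x\<in>T. \<forall>y\<in>T. y \<otimes> inv x \<in> M \<longleftrightarrow> y \<otimes> inv x \<in> M'"
  shows "mat_mul (group_algebra (G Mod M)) n A B = mat_id (group_algebra (G Mod M)) n \<longleftrightarrow>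
    mat_mul (group_algebra (G Mod M')) n A' B' = mat_id (group_algebra (G Mod M')) n"
proof -
  have "supp (mat_id (group_algebra G) n i j :: 'a \<Rightarrow> 'k) \<subseteq> T" for i j
    using assms(9) by (auto simp: mat_id_def supp_def)
  then show ?thesis
    by (simp add: normal.mat_mul_eq_mat_id_iff_galg_push[OF assms(1,3,4)]
        normal.mat_mul_eq_mat_id_iff_galg_push[OF assms(2,5,6)]
        galg_push_eq_transfer[OF assms(1,2,7,8) assms(10) _ assms(11)])
qed

lemma not_stably_finite_finitely_determined:
  fixes G :: "('a, 'c) monoid_scheme" (structure)
  assumes "N \<lhd> G" "\<not> stably_finite (group_algebra (G Mod N) :: ('a set \<Rightarrow> 'k::field) ring)"
  shows "\<exists>F. finite F \<and> F \<subseteq> carrier G \<and> (\<forall>N'. N' \<lhd> G \<longrightarrow> (\<forall>x\<in>F. x \<in> N' \<longleftrightarrow> x \<in> N) \<longrightarrow>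
      \<not> stably_finite (group_algebra (G Mod N') :: ('a set \<Rightarrow> 'k) ring))"
proof -
  interpret N: normal N G by fact
  let ?KG = "group_algebra G :: ('a \<Rightarrow> 'k) ring"
  let ?Q = "\<lambda>M. group_algebra (G Mod M) :: ('a set \<Rightarrow> 'k) ring"
  obtain n A B where AB: "A \<in> mats (?Q N) n" "B \<in> mats (?Q N) n"
    "mat_mul (?Q N) n A B = mat_id (?Q N) n" "mat_mul (?Q N) n B A \<noteq> mat_id (?Q N) n"
    using assms(2) unfolding stably_finite_def by blast
  obtain a b where ab: "mat_lift G N n a A" "mat_lift G N n b B"
    using N.mat_lift_exists[OF AB(1)] N.mat_lift_exists[OF AB(2)] by metis
  then have ab_carrier: "\<And>i k. a i k \<in> galg_carrier G" "\<And>i k. b i k \<in> galg_carrier G"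
    unfolding mat_lift_def by auto
  define T where "T = insert \<one> (\<Union>i<n. \<Union>j<n. supp (mat_mul ?KG n a b i j) \<union> supp (mat_mul ?KG n b a i j))"
  have T: "finite T" "T \<subseteq> carrier G"
    using N.mat_mul_in_galg_carrier[OF ab_carrier] N.mat_mul_in_galg_carrier[OF ab_carrier(2,1)]
    unfolding T_def galg_carrier_iff by (auto simp: subset_iff)
  have supp_T: "supp (mat_mul ?KG n a b i j) \<subseteq> T" "supp (mat_mul ?KG n b a i j) \<subseteq> T" for i j
    unfolding T_def by (cases "i < n \<and> j < n"; auto simp: mat_mul_def supp_def)+
  define F where "F = (\<lambda>(x, y). y \<otimes> inv x) ` (T \<times> T)"
  show ?thesis
  proof (intro exI[of _ F] conjI allI impI)
    show "finite F" "F \<subseteq> carrier G" unfolding F_def using T by auto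
    fix N' assume N': "N' \<lhd> G" "\<forall>x\<in>F. x \<in> N' \<longleftrightarrow> x \<in> N"
    interpret N': normal N' G by fact
    define A' where "A' = (\<lambda>i k. galg_push G N' (a i k))"
    define B' where "B' = (\<lambda>i k. galg_push G N' (b i k))"
    have ab': "mat_lift G N' n a A'" "mat_lift G N' n b B'"
      unfolding A'_def B'_def by (simp_all add: mat_lift_galg_push ab_carrier)
    have agree: "\<forall>x\<in>T. \<forall>y\<in>T. y \<otimes> inv x \<in> N \<longleftrightarrow> y \<otimes> inv x \<in> N'" using N'(2) unfolding F_def by auto
    have "mat_mul (?Q N') n A' B' = mat_id (?Q N') n"
      using AB(3) mat_mul_eq_mat_id_transfer[OF assms(1) N'(1) ab ab' T _ supp_T(1) agree]
      by (simp add: T_def)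
    moreover have "A' \<in> mats (?Q N') n" "B' \<in> mats (?Q N') n"
      unfolding mats_def A'_def B'_def by (simp_all add: N'.galg_push_in_galg_carrier ab_carrier)
    ultimately have "mat_mul (?Q N') n B' A' = mat_id (?Q N') n"
      if "stably_finite (?Q N')" using that unfolding stably_finite_def by blast
    moreover have "mat_mul (?Q N') n B' A' \<noteq> mat_id (?Q N') n"
      using AB(4) mat_mul_eq_mat_id_transfer[OF assms(1) N'(1) ab(2,1) ab'(2,1) T _ supp_T(2) agree]
      by (simp add: T_def)
    ultimately show "\<not> stably_finite (?Q N')" by blast
  qed
qed

section \<open>The space of normal subgroups\<close>

lemma topspace_powerset_topology: "topspace (powerset_topology G) = carrier G \<rightarrow>\<^sub>E (UNIV :: bool set)"
  unfolding powerset_topology_def by (simp add: topspace_product_topology)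

lemma set_to_point_in_topspace: "set_to_point G N \<in> topspace (powerset_topology G)"
  unfolding topspace_powerset_topology set_to_point_def by auto

lemma compact_space_powerset_topology: "compact_space (powerset_topology G)"
  unfolding powerset_topology_def
  by (simp add: compact_space_product_topology compact_space_discrete_topology)

lemma openin_powerset_topology_agree:
  assumes "finite F" "F \<subseteq> carrier G"
  shows "openin (powerset_topology G) {q \<in> topspace (powerset_topology G). \<forall>x\<in>F. q x = p x}"
  using assms
proof (induction F rule: finite_induct)
  case (insert a F)
  have "continuous_map (powerset_topology G) (discrete_topology UNIV) (\<lambda>q. q a)"
    unfolding powerset_topology_def using insert.prems by (intro continuous_map_product_projection) auto
  then have "openin (powerset_topology G) {q \<in> topspace (powerset_topology G). q a \<in> {p a}}"
    by (rule openin_continuous_map_preimage) simp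
  moreover have "{q \<in> topspace (powerset_topology G). \<forall>x\<in>insert a F. q x = p x} =
     {q \<in> topspace (powerset_topology G). q a \<in> {p a}} \<inter> {q \<in> topspace (powerset_topology G). \<forall>x\<in>F. q x = p x}"
    by auto
  ultimately show ?case using insert by (simp add: openin_Int)
qed simp

lemma closedin_powerset_topologyI:
  assumes "S \<subseteq> topspace (powerset_topology G)"
    and "\<And>p. p \<in> topspace (powerset_topology G) \<Longrightarrow> p \<notin> S \<Longrightarrow>
      \<exists>F. finite F \<and> F \<subseteq> carrier G \<and> (\<forall>q\<in>topspace (powerset_topology G). (\<forall>x\<in>F. q x = p x) \<longrightarrow> q \<notin> S)"
  shows "closedin (powerset_topology G) S"
  unfolding closedin_def
proof (rule conjI[OF assms(1)], subst openin_subopen, intro ballI)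
  fix p assume p: "p \<in> topspace (powerset_topology G) - S"
  then obtain F where F: "finite F" "F \<subseteq> carrier G"
    "\<forall>q\<in>topspace (powerset_topology G). (\<forall>x\<in>F. q x = p x) \<longrightarrow> q \<notin> S"
    using assms(2)[of p] by blast
  let ?U = "{q \<in> topspace (powerset_topology G). \<forall>x\<in>F. q x = p x}"
  show "\<exists>U. openin (powerset_topology G) U \<and> p \<in> U \<and> U \<subseteq> topspace (powerset_topology G) - S"
  proof (intro exI conjI)
    show "openin (powerset_topology G) ?U" by (rule openin_powerset_topology_agree[OF F(1,2)])
    show "p \<in> ?U" using p by simp
    show "?U \<subseteq> topspace (powerset_topology G) - S" using F(3) by auto
  qed
qed

definition violates_normal_subgroup :: "('a, 'c) monoid_scheme \<Rightarrow> ('a \<Rightarrow> bool) \<Rightarrow> bool" where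
  "violates_normal_subgroup G p \<longleftrightarrow> \<not> p \<one>\<^bsub>G\<^esub>
     \<or> (\<exists>a\<in>carrier G. \<exists>b\<in>carrier G. p a \<and> p b \<and> \<not> p (a \<otimes>\<^bsub>G\<^esub> b))
     \<or> (\<exists>a\<in>carrier G. p a \<and> \<not> p (inv\<^bsub>G\<^esub> a))
     \<or> (\<exists>x\<in>carrier G. \<exists>h\<in>carrier G. p h \<and> \<not> p (x \<otimes>\<^bsub>G\<^esub> h \<otimes>\<^bsub>G\<^esub> inv\<^bsub>G\<^esub> x))"

lemma normal_subgroup_space_iff:
  fixes G :: "('a, 'c) monoid_scheme" (structure)
  assumes "group G"
  shows "p \<in> normal_subgroup_space G \<longleftrightarrow>
    p \<in> topspace (powerset_topology G) \<and> \<not> violates_normal_subgroup G p"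
proof
  assume "p \<in> normal_subgroup_space G"
  then obtain N where N: "N \<lhd> G" "p = set_to_point G N"
    unfolding normal_subgroup_space_def by auto
  interpret N: normal N G by fact
  have p_iff: "p x \<longleftrightarrow> x \<in> N" if "x \<in> carrier G" for x
    using N(2) that unfolding set_to_point_def by simp
  have "\<not> violates_normal_subgroup G p"
    unfolding violates_normal_subgroup_def
    using N.subgroup_axioms N.inv_op_closed2 by (auto simp: p_iff subgroup.one_closed subgroup.m_closed subgroup.m_inv_closed)
  then show "p \<in> topspace (powerset_topology G) \<and> \<not> violates_normal_subgroup G p"
    using N(2) set_to_point_in_topspace by simp
next
  interpret group G by fact
  assume p: "p \<in> topspace (powerset_topology G) \<and> \<not> violates_normal_subgroup G p"
  then have closed: "p \<one>" "\<And>a b. a \<in> carrier G \<Longrightarrow> b \<in> carrier G \<Longrightarrow> p a \<Longrightarrow> p b \<Longrightarrow> p (a \<otimes> b)"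
    "\<And>a. a \<in> carrier G \<Longrightarrow> p a \<Longrightarrow> p (inv a)"
    "\<And>x h. x \<in> carrier G \<Longrightarrow> h \<in> carrier G \<Longrightarrow> p h \<Longrightarrow> p (x \<otimes> h \<otimes> inv x)"
    unfolding violates_normal_subgroup_def by blast+
  define N where "N = {x \<in> carrier G. p x}"
  have "set_to_point G N = restrict p (carrier G)"
    unfolding set_to_point_def N_def by (intro restrict_ext) simp
  also have "\<dots> = p"
    using p by (intro PiE_restrict[where B="\<lambda>_. UNIV"]) (simp add: topspace_powerset_topology)
  finally have p_eq: "set_to_point G N = p" .
  have "subgroup N G"
    by (intro subgroupI) (auto simp: N_def closed)
  then have "N \<lhd> G"
    unfolding normal_inv_iff by (auto simp: N_def closed)
  then show "p \<in> normal_subgroup_space G" using p_eq unfolding normal_subgroup_space_def by blast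
qed

lemma violates_normal_subgroup_on_finite_set:
  fixes G :: "('a, 'c) monoid_scheme" (structure)
  assumes "group G" "violates_normal_subgroup G p"
  obtains F where "finite F" "F \<subseteq> carrier G" "\<And>q. \<forall>x\<in>F. q x = p x \<Longrightarrow> violates_normal_subgroup G q"
proof -
  interpret group G by fact
  consider "\<not> p \<one>"
    | a b where "a \<in> carrier G" "b \<in> carrier G" "p a" "p b" "\<not> p (a \<otimes> b)"
    | a where "a \<in> carrier G" "p a" "\<not> p (inv a)"
    | x h where "x \<in> carrier G" "h \<in> carrier G" "p h" "\<not> p (x \<otimes> h \<otimes> inv x)"
    using assms(2) unfolding violates_normal_subgroup_def by blast
  then show ?thesis
  proof cases
    case 1
    show ?thesis
    proof (rule that[of "{\<one>}"])
      fix q assume "\<forall>x\<in>{\<one>}. q x = p x"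
      then show "violates_normal_subgroup G q" using 1 unfolding violates_normal_subgroup_def by simp
    qed simp_all
  next
    case 2
    show ?thesis
    proof (rule that[of "{a, b, a \<otimes> b}"])
      fix q assume "\<forall>x\<in>{a, b, a \<otimes> b}. q x = p x"
      then have "q a" "q b" "\<not> q (a \<otimes> b)" using 2 by auto
      then show "violates_normal_subgroup G q" using 2 unfolding violates_normal_subgroup_def by blast
    qed (use 2 in simp_all)
  next
    case 3
    show ?thesis
    proof (rule that[of "{a, inv a}"])
      fix q assume "\<forall>x\<in>{a, inv a}. q x = p x"
      then have "q a" "\<not> q (inv a)" using 3 by auto
      then show "violates_normal_subgroup G q" using 3 unfolding violates_normal_subgroup_def by blast
    qed (use 3 in simp_all)
  next
    case 4
    show ?thesis
    proof (rule that[of "{h, x \<otimes> h \<otimes> inv x}"])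
      fix q assume "\<forall>y\<in>{h, x \<otimes> h \<otimes> inv x}. q y = p y"
      then have "q h" "\<not> q (x \<otimes> h \<otimes> inv x)" using 4 by auto
      then show "violates_normal_subgroup G q" using 4 unfolding violates_normal_subgroup_def by blast
    qed (use 4 in simp_all)
  qed
qed

lemma closedin_normal_subgroups_with:
  fixes G :: "('a, 'c) monoid_scheme" (structure)
  assumes "group G"
    and "\<And>N. N \<lhd> G \<Longrightarrow> \<not> P N \<Longrightarrow>
      \<exists>F. finite F \<and> F \<subseteq> carrier G \<and> (\<forall>N'. N' \<lhd> G \<longrightarrow> (\<forall>x\<in>F. x \<in> N' \<longleftrightarrow> x \<in> N) \<longrightarrow> \<not> P N')"
  shows "closedin (powerset_topology G) (set_to_point G ` {N. N \<lhd> G \<and> P N})"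
    (is "closedin _ ?S")
proof (rule closedin_powerset_topologyI)
  show "?S \<subseteq> topspace (powerset_topology G)" using set_to_point_in_topspace by blast
  fix p assume p: "p \<in> topspace (powerset_topology G)" "p \<notin> ?S"
  show "\<exists>F. finite F \<and> F \<subseteq> carrier G \<and> (\<forall>q\<in>topspace (powerset_topology G). (\<forall>x\<in>F. q x = p x) \<longrightarrow> q \<notin> ?S)"
  proof (cases "violates_normal_subgroup G p")
    case True
    then obtain F where F: "finite F" "F \<subseteq> carrier G" "\<And>q. \<forall>x\<in>F. q x = p x \<Longrightarrow> violates_normal_subgroup G q"
      using violates_normal_subgroup_on_finite_set[OF assms(1) True] by blast
    have "?S \<subseteq> normal_subgroup_space G" unfolding normal_subgroup_space_def by blast
    then have "q \<notin> ?S" if "\<forall>x\<in>F. q x = p x" for q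
      using F(3)[OF that] normal_subgroup_space_iff[OF assms(1)] by blast
    then show ?thesis using F(1,2) by blast
  next
    case False
    then obtain N where N: "N \<lhd> G" "p = set_to_point G N"
      using p(1) normal_subgroup_space_iff[OF assms(1)] unfolding normal_subgroup_space_def by blast
    then have "\<not> P N" using p(2) by blast
    then obtain F where F: "finite F" "F \<subseteq> carrier G"
      "\<forall>N'. N' \<lhd> G \<longrightarrow> (\<forall>x\<in>F. x \<in> N' \<longleftrightarrow> x \<in> N) \<longrightarrow> \<not> P N'"
      using assms(2)[OF N(1)] by blast
    have "q \<notin> ?S" if "\<forall>x\<in>F. q x = p x" for q
    proof
      assume "q \<in> ?S"
      then obtain N' where N': "N' \<lhd> G" "P N'" "q = set_to_point G N'" by blast
      have "\<forall>x\<in>F. x \<in> N' \<longleftrightarrow> x \<in> N"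
        using that F(2) N(2) N'(3) unfolding set_to_point_def by (auto simp: subset_iff)
      then show False using F(3) N'(1,2) by blast
    qed
    then show ?thesis using F(1,2) by blast
  qed
qed

theorem corollary1p5:
  fixes G :: "('a, 'c) monoid_scheme"
  assumes "group G"
  defines "S \<equiv> set_to_point G ` {N. N \<lhd> G \<and>
              stably_finite (group_algebra (G Mod N) :: ('a set \<Rightarrow> 'k::field) ring)}"
  shows "closedin (subtopology (powerset_topology G) (normal_subgroup_space G)) S
       \<and> compactin (powerset_topology G) S"
proof -
  have "closedin (powerset_topology G) S"
    unfolding S_def by (rule closedin_normal_subgroups_with[OF assms(1) not_stably_finite_finitely_determined])
  moreover have "S \<subseteq> normal_subgroup_space G"
    unfolding S_def normal_subgroup_space_def by blast
  ultimately show ?thesis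
    by (simp add: closedin_subset_topspace closedin_compact_space compact_space_powerset_topology)
qed

end
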